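(* Let $E$ be a $C$-pseudo-cone. Then $E$ is a $C$-asymptotic set if and only if $h_E(v)=0$ for all $v\in\partial\Omega_{C^\circ}$.
   Context: $C\subset\mathbb{R}^n$ ($n\ge2$) is a pointed closed convex cone with nonempty interior; $C^\circ$ its polar cone; $\partial\Omega_{C^\circ}=\mathbb{S}^{n-1}\cap\partial C^\circ$. A $C$-pseudo-cone is a nonempty closed convex set $E$ with $o\notin E$, $\lambda x\in E$ for all $x\in E,\lambda\ge1$, and recession cone equal to $C$. A $C$-asymptotic set is an unbounded closed convex set $\mathbb{A}\subset C$ with nonempty interior and $o\notin\mathbb{A}$ such that $\lim_{x\in\partial\mathbb{A},|x|\to\infty}d(x,\partial C)=0$. $h_E(v)=\sup_{x\in E}\langle x,v\rangle$. *)

theory Defs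
  imports "HOL-Analysis.Analysis"
begin

definition pointed_convex_cone :: "'a::euclidean_space set \<Rightarrow> bool" where
  "pointed_convex_cone C \<longleftrightarrow> cone C \<and> convex C \<and> closed C \<and> interior C \<noteq> {}
     \<and> C \<inter> uminus ` C = {0}"

definition polar_cone :: "'a::euclidean_space set \<Rightarrow> 'a set" where
  "polar_cone C = {v. \<forall>x\<in>C. x \<bullet> v \<le> 0}"

definition recession_cone :: "'a::euclidean_space set \<Rightarrow> 'a set" where
  "recession_cone E = {y. \<forall>x\<in>E. \<forall>t::real. t \<ge> 0 \<longrightarrow> x + t *\<^sub>R y \<in> E}"

definition pseudo_cone :: "'a::euclidean_space set \<Rightarrow> 'a set \<Rightarrow> bool" where
  "pseudo_cone C E \<longleftrightarrow> E \<noteq> {} \<and> closed E \<and> convex E \<and> 0 \<notin> E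
     \<and> (\<forall>x\<in>E. \<forall>l::real. l \<ge> 1 \<longrightarrow> l *\<^sub>R x \<in> E)
     \<and> recession_cone E = C"

definition asymptotic_set :: "'a::euclidean_space set \<Rightarrow> 'a set \<Rightarrow> bool" where
  "asymptotic_set C A \<longleftrightarrow> \<not> bounded A \<and> closed A \<and> convex A \<and> A \<subseteq> C
     \<and> interior A \<noteq> {} \<and> 0 \<notin> A
     \<and> (\<forall>\<epsilon>>0. \<exists>R. \<forall>x\<in>frontier A. norm x > R \<longrightarrow> infdist x (frontier C) < \<epsilon>)"

definition support_fun :: "'a::euclidean_space set \<Rightarrow> 'a \<Rightarrow> real" where
  "support_fun E v = (SUP x\<in>E. x \<bullet> v)"

end

theory Submission
  imports Defs
begin

text \<open>
  A pseudo-cone satisfies \<open>E + C \<subseteq> E \<subseteq> C\<close>, so every unit outer normal \<open>w\<close> of \<open>E\<close> lies in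
  the polar cone, and a boundary point \<open>x\<close> of \<open>E\<close> with normal \<open>w\<close> is within distance
  \<open>-x\<bullet>w\<close> of the boundary of \<open>C\<close>. If \<open>h\<^sub>E\<close> vanishes on the unit sphere of the boundary of
  the polar cone, the compact set of unit normals \<open>w\<close> with \<open>h\<^sub>E(w) \<le> -\<epsilon>\<close> lies in the interior
  of the polar cone, where \<open>x\<bullet>w \<le> -c|x|\<close> uniformly on \<open>C\<close>; so far out on the boundary of \<open>E\<close>
  the normals satisfy \<open>-x\<bullet>w < \<epsilon>\<close>. Conversely, if \<open>h\<^sub>E(v) < 0\<close> for a boundary direction \<open>v\<close>,
  pick \<open>u \<in> C - {0}\<close> with \<open>u\<bullet>v = 0\<close>: the boundary points of \<open>E\<close> on the segments from \<open>tu\<close>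
  to \<open>tu + x\<^sub>0\<close>, \<open>x\<^sub>0\<close> interior to \<open>E\<close>, escape to infinity while staying a fixed depth
  inside \<open>C\<close>.
\<close>

text \<open>\<open>z + t x\<close> is the limit, as \<open>a \<rightarrow> 0\<^sup>+\<close>, of the convex combinations
  \<open>(1 - a) z + a ((1 + t/a) x)\<close>.\<close>

lemma scaling_closed_point_in_recession_cone:
  fixes E :: "'a::real_normed_vector set"
  assumes "closed E" "convex E" "\<forall>x\<in>E. \<forall>l::real. l \<ge> 1 \<longrightarrow> l *\<^sub>R x \<in> E"
    and "x \<in> E" "z \<in> E" "t \<ge> 0"
  shows "z + t *\<^sub>R x \<in> E"
proof (rule Lim_in_closed_set[OF \<open>closed E\<close>])
  show "((\<lambda>a. z + t *\<^sub>R x + a *\<^sub>R (x - z)) \<longlongrightarrow> z + t *\<^sub>R x) (at_right 0)"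
  proof -
    have "((\<lambda>a::real. a *\<^sub>R (x - z)) \<longlongrightarrow> 0 *\<^sub>R (x - z)) (at_right 0)"
      by (intro tendsto_intros)
    then show ?thesis
      using tendsto_add[OF tendsto_const] by fastforce
  qed
  have "z + t *\<^sub>R x + a *\<^sub>R (x - z) \<in> E" if "0 < a" "a < 1" for a
  proof -
    have "(1 + t / a) *\<^sub>R x \<in> E"
      using assms(3,4,6) that by simp
    then have "(1 - a) *\<^sub>R z + a *\<^sub>R ((1 + t / a) *\<^sub>R x) \<in> E"
      using convexD[OF \<open>convex E\<close> \<open>z \<in> E\<close>, of _ "1 - a" a] that
      by (simp del: scaleR_scaleR)
    then show ?thesis
      using that by (simp add: algebra_simps)
  qed
  then show "\<forall>\<^sub>F a in at_right 0. z + t *\<^sub>R x + a *\<^sub>R (x - z) \<in> E"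
    unfolding eventually_at_right_field by (auto intro!: exI[of _ 1])
qed simp

lemma pseudo_cone_subset_cone:
  assumes "pseudo_cone C E"
  shows "E \<subseteq> C"
proof
  fix x assume "x \<in> E"
  then have "x \<in> recession_cone E"
    using assms scaling_closed_point_in_recession_cone[of E x]
    unfolding pseudo_cone_def recession_cone_def by blast
  then show "x \<in> C"
    using assms unfolding pseudo_cone_def by simp
qed

lemma pseudo_cone_add_cone:
  assumes "pseudo_cone C E" "x \<in> E" "c \<in> C"
  shows "x + c \<in> E"
  using assms unfolding pseudo_cone_def recession_cone_def
  by (metis (no_types, lifting) mem_Collect_eq order_refl scaleR_one zero_le_one)

lemma pseudo_cone_unbounded:
  assumes "pseudo_cone C E"
  shows "\<not> bounded E"
proof
  assume "bounded E"
  then obtain B where B: "\<And>x. x \<in> E \<Longrightarrow> norm x \<le> B"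
    unfolding bounded_iff by blast
  obtain x where x: "x \<in> E" and "x \<noteq> 0"
    using assms unfolding pseudo_cone_def by force
  define l where "l = max 1 ((\<bar>B\<bar> + 1) / norm x)"
  have "l *\<^sub>R x \<in> E"
    using assms x unfolding pseudo_cone_def l_def by simp
  moreover have "\<bar>B\<bar> + 1 \<le> l * norm x"
    using \<open>x \<noteq> 0\<close> pos_divide_le_eq[of "norm x"] unfolding l_def by force
  moreover have "norm (l *\<^sub>R x) = l * norm x"
    unfolding l_def by simp
  ultimately show False
    using B by fastforce
qed

lemma pseudo_cone_interior_nonempty:
  assumes "pseudo_cone C E" "interior C \<noteq> {}"
  shows "interior E \<noteq> {}"
proof -
  obtain x where "x \<in> E"
    using assms unfolding pseudo_cone_def by blast
  then have "(\<lambda>c. x + c) ` interior C \<subseteq> E"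
    using pseudo_cone_add_cone[OF assms(1)] interior_subset by blast
  then have "(\<lambda>c. x + c) ` interior C \<subseteq> interior E"
    by (simp add: interior_maximal open_translation)
  then show ?thesis
    using assms(2) by blast
qed

lemma pseudo_cone_supporting_polar_normal:
  assumes "pseudo_cone C E" "interior E \<noteq> {}" "x \<in> frontier E"
  obtains w where "norm w = 1" "w \<in> polar_cone C" "\<And>y. y \<in> E \<Longrightarrow> y \<bullet> w \<le> x \<bullet> w"
proof -
  have "closed E" "convex E"
    using assms(1) unfolding pseudo_cone_def by auto
  then have "x \<in> E" "x \<notin> rel_interior E"
    using assms(3) rel_interior_nonempty_interior[OF assms(2)]
    by (auto simp: frontier_def)
  then obtain a where "a \<noteq> 0" and a: "\<And>y. y \<in> E \<Longrightarrow> a \<bullet> x \<le> a \<bullet> y"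
    using supporting_hyperplane_relative_frontier[OF \<open>convex E\<close>] closure_subset
    by (metis subset_eq)
  define w where "w = - ((1 / norm a) *\<^sub>R a)"
  have sup: "y \<bullet> w \<le> x \<bullet> w" if "y \<in> E" for y
    using a[OF that] \<open>a \<noteq> 0\<close> unfolding w_def
    by (simp add: inner_commute divide_right_mono)
  have "c \<bullet> w \<le> 0" if "c \<in> C" for c
    using sup[OF pseudo_cone_add_cone[OF assms(1) \<open>x \<in> E\<close> that]]
    by (simp add: inner_add_left)
  then have "w \<in> polar_cone C"
    unfolding polar_cone_def by simp
  moreover have "norm w = 1"
    using \<open>a \<noteq> 0\<close> unfolding w_def by simp
  ultimately show thesis
    using that sup by blast
qed

lemma closed_polar_cone: "closed (polar_cone C)"
proof -
  have "polar_cone C = (\<Inter>x\<in>C. {v. x \<bullet> v \<le> 0})"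
    unfolding polar_cone_def by auto
  then show ?thesis
    by (simp add: closed_INT closed_halfspace_le)
qed

lemma support_fun_le_iff:
  assumes "E \<noteq> {}" "E \<subseteq> C" "v \<in> polar_cone C"
  shows "support_fun E v \<le> a \<longleftrightarrow> (\<forall>x\<in>E. x \<bullet> v \<le> a)"
proof -
  have "bdd_above ((\<lambda>x. x \<bullet> v) ` E)"
    using assms(2,3) unfolding polar_cone_def by (intro bdd_aboveI2[of _ _ 0]) auto
  then show ?thesis
    unfolding support_fun_def using cSUP_le_iff[OF assms(1)] by blast
qed

lemma cone_inner_uniformly_negative:
  fixes C T :: "'a::euclidean_space set"
  assumes "closed C" "cone C" "compact T"
    and neg: "\<And>w y. w \<in> T \<Longrightarrow> y \<in> C \<Longrightarrow> y \<noteq> 0 \<Longrightarrow> y \<bullet> w < 0"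
  obtains c where "c > 0" "\<And>w y. w \<in> T \<Longrightarrow> y \<in> C \<Longrightarrow> y \<bullet> w \<le> - c * norm y"
proof -
  define K where "K = C \<inter> sphere 0 1"
  have normalized: "(1 / norm y) *\<^sub>R y \<in> K" if "y \<in> C" "y \<noteq> 0" for y
    using \<open>cone C\<close> that unfolding K_def cone_def by simp
  show thesis
  proof (cases "T \<times> K = {}")
    case True
    then have zero: "y = 0" if "w \<in> T" "y \<in> C" for w y
      using normalized that by blast
    show thesis
      by (rule that[of 1]) (use zero in force)+
  next
    case False
    have "compact (T \<times> K)"
      unfolding K_def using assms(1,3) by (simp add: compact_Times closed_Int_compact)
    moreover have "continuous_on (T \<times> K) (\<lambda>(w, y). y \<bullet> w)"
      by (simp add: case_prod_unfold continuous_intros)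
    ultimately obtain w0 y0 where "w0 \<in> T" "y0 \<in> K"
      and max: "\<And>w y. w \<in> T \<Longrightarrow> y \<in> K \<Longrightarrow> y \<bullet> w \<le> y0 \<bullet> w0"
      using continuous_attains_sup[OF _ False] by fastforce
    have "y0 \<in> C" "y0 \<noteq> 0"
      using \<open>y0 \<in> K\<close> unfolding K_def by auto
    then have "y0 \<bullet> w0 < 0"
      using neg \<open>w0 \<in> T\<close> by blast
    moreover have "y \<bullet> w \<le> (y0 \<bullet> w0) * norm y" if "w \<in> T" "y \<in> C" for w y
    proof (cases "y = 0")
      case False
      then have "(y \<bullet> w) / norm y \<le> y0 \<bullet> w0"
        using max[OF \<open>w \<in> T\<close> normalized[OF \<open>y \<in> C\<close>]] by simp
      then show ?thesis
        using False by (simp add: divide_le_eq)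
    qed simp
    ultimately show thesis
      using that[of "- (y0 \<bullet> w0)"] by simp
  qed
qed

lemma interior_polar_cone_iff:
  fixes C :: "'a::euclidean_space set"
  assumes "closed C" "cone C"
  shows "w \<in> interior (polar_cone C) \<longleftrightarrow> (\<forall>y\<in>C. y \<noteq> 0 \<longrightarrow> y \<bullet> w < 0)"
proof
  assume "w \<in> interior (polar_cone C)"
  then obtain \<eta> where "\<eta> > 0" and ball: "ball w \<eta> \<subseteq> polar_cone C"
    using mem_interior by blast
  show "\<forall>y\<in>C. y \<noteq> 0 \<longrightarrow> y \<bullet> w < 0"
  proof (intro ballI impI)
    fix y assume "y \<in> C" "y \<noteq> 0"
    have "w + (\<eta> / (2 * norm y)) *\<^sub>R y \<in> ball w \<eta>"
      using \<open>\<eta> > 0\<close> \<open>y \<noteq> 0\<close> by (simp add: dist_norm)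
    then have "y \<bullet> (w + (\<eta> / (2 * norm y)) *\<^sub>R y) \<le> 0"
      using ball \<open>y \<in> C\<close> unfolding polar_cone_def by blast
    then have "y \<bullet> w + \<eta> * norm y / 2 \<le> 0"
      using \<open>y \<noteq> 0\<close> by (simp add: inner_add_right dot_square_norm power2_eq_square)
    moreover have "\<eta> * norm y / 2 > 0"
      using \<open>\<eta> > 0\<close> \<open>y \<noteq> 0\<close> by simp
    ultimately show "y \<bullet> w < 0"
      by linarith
  qed
next
  assume "\<forall>y\<in>C. y \<noteq> 0 \<longrightarrow> y \<bullet> w < 0"
  then obtain c where "c > 0" and c: "\<And>y. y \<in> C \<Longrightarrow> y \<bullet> w \<le> - c * norm y"
    using cone_inner_uniformly_negative[OF assms compact_sing[of w]] by (metis singletonI singletonD)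
  have "ball w c \<subseteq> polar_cone C"
  proof
    fix w' assume "w' \<in> ball w c"
    have "y \<bullet> w' \<le> 0" if "y \<in> C" for y
    proof -
      have "y \<bullet> (w' - w) \<le> norm y * norm (w' - w)"
        by (rule norm_cauchy_schwarz)
      also have "\<dots> \<le> norm y * c"
        using \<open>w' \<in> ball w c\<close> by (intro mult_left_mono) (auto simp: dist_norm norm_minus_commute)
      finally show ?thesis
        using c[OF that] by (simp add: inner_diff_right algebra_simps)
    qed
    then show "w' \<in> polar_cone C"
      unfolding polar_cone_def by simp
  qed
  then show "w \<in> interior (polar_cone C)"
    using \<open>c > 0\<close> mem_interior by blast
qed

lemma frontier_polar_cone_iff:
  fixes C :: "'a::euclidean_space set"
  assumes "closed C" "cone C"
  shows "w \<in> frontier (polar_cone C) \<longleftrightarrow> w \<in> polar_cone C \<and> (\<exists>y\<in>C. y \<noteq> 0 \<and> y \<bullet> w = 0)"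
proof -
  have frontier: "w \<in> frontier (polar_cone C) \<longleftrightarrow> w \<in> polar_cone C \<and> w \<notin> interior (polar_cone C)"
    using closed_polar_cone[of C] by (simp add: frontier_def closure_closed)
  note interior = interior_polar_cone_iff[OF assms, of w]
  show ?thesis
  proof
    assume "w \<in> frontier (polar_cone C)"
    then obtain y where "w \<in> polar_cone C" "y \<in> C" "y \<noteq> 0" "\<not> y \<bullet> w < 0"
      using frontier interior by blast
    moreover from this have "y \<bullet> w \<le> 0"
      unfolding polar_cone_def by blast
    ultimately show "w \<in> polar_cone C \<and> (\<exists>y\<in>C. y \<noteq> 0 \<and> y \<bullet> w = 0)"
      by force
  next
    assume "w \<in> polar_cone C \<and> (\<exists>y\<in>C. y \<noteq> 0 \<and> y \<bullet> w = 0)"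
    then show "w \<in> frontier (polar_cone C)"
      using frontier interior by fastforce
  qed
qed

lemma infdist_frontier_le_polar:
  fixes C :: "'a::euclidean_space set"
  assumes "x \<in> C" "w \<in> polar_cone C" "norm w = 1"
  shows "infdist x (frontier C) \<le> - (x \<bullet> w)"
proof -
  \<comment> \<open>the orthogonal projection of \<open>x\<close> onto the hyperplane \<open>w\<^sup>\<bottom>\<close>, which supports \<open>C\<close>\<close>
  define p where "p = x - (x \<bullet> w) *\<^sub>R w"
  have "w \<bullet> w = 1"
    using \<open>norm w = 1\<close> by (simp add: norm_eq_1)
  then have "p \<bullet> w = 0"
    unfolding p_def by (simp add: inner_diff_left)
  have "x \<bullet> w \<le> 0"
    using assms(1,2) unfolding polar_cone_def by blast
  then have "dist x p = - (x \<bullet> w)"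
    using \<open>norm w = 1\<close> unfolding p_def by (simp add: dist_norm)
  have "p \<notin> interior C"
  proof
    assume "p \<in> interior C"
    then obtain \<eta> where "\<eta> > 0" "ball p \<eta> \<subseteq> C"
      using mem_interior by blast
    moreover have "p + (\<eta> / 2) *\<^sub>R w \<in> ball p \<eta>"
      using \<open>\<eta> > 0\<close> \<open>norm w = 1\<close> by (simp add: dist_norm)
    ultimately have "p + (\<eta> / 2) *\<^sub>R w \<in> C"
      by blast
    then have "(p + (\<eta> / 2) *\<^sub>R w) \<bullet> w \<le> 0"
      using assms(2) unfolding polar_cone_def by blast
    moreover have "(p + (\<eta> / 2) *\<^sub>R w) \<bullet> w = \<eta> / 2"
      using \<open>w \<bullet> w = 1\<close> \<open>p \<bullet> w = 0\<close> by (simp add: inner_add_left)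
    ultimately show False
      using \<open>\<eta> > 0\<close> by simp
  qed
  obtain q where "q \<in> frontier C" "dist x q \<le> dist x p"
  proof (cases "p \<in> C")
    case True
    then have "p \<in> frontier C"
      using \<open>p \<notin> interior C\<close> closure_subset unfolding frontier_def by blast
    then show thesis
      using that[of p] by simp
  next
    case False
    have "closed_segment x p \<inter> frontier C \<noteq> {}"
      by (rule connected_Int_frontier[OF connected_segment]) (use \<open>x \<in> C\<close> False in auto)
    then obtain q where "q \<in> closed_segment x p" "q \<in> frontier C"
      by blast
    moreover from this have "dist x q \<le> dist x p"
      using dist_in_closed_segment[of q x p] by (simp add: dist_commute)
    ultimately show thesis
      using that by blast
  qed
  then show ?thesis
    using \<open>dist x p = - (x \<bullet> w)\<close> infdist_le[of q "frontier C" x] by linarith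
qed

lemma ball_subset_le_infdist_frontier:
  assumes "ball z r \<subseteq> C" "frontier C \<noteq> {}"
  shows "r \<le> infdist z (frontier C)"
  unfolding infdist_notempty[OF assms(2)]
proof (rule cINF_greatest[OF assms(2)])
  fix p assume "p \<in> frontier C"
  moreover have "ball z r \<subseteq> interior C"
    using interior_maximal[OF assms(1)] by simp
  ultimately have "p \<notin> ball z r"
    unfolding frontier_def by blast
  then show "r \<le> dist z p"
    by simp
qed

lemma convex_cone_ball_translate_scale:
  fixes C :: "'a::real_normed_vector set"
  assumes "convex C" "cone C" "ball x r \<subseteq> C" "a \<in> C" "l > 0"
  shows "ball (a + l *\<^sub>R x) (l * r) \<subseteq> C"
proof
  have add: "u + v \<in> C" and scale: "c *\<^sub>R u \<in> C" if "u \<in> C" "v \<in> C" "c \<ge> 0" for u v c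
    using assms(1,2) convex_cone[of C] that by blast+
  fix q assume "q \<in> ball (a + l *\<^sub>R x) (l * r)"
  define y where "y = x + (1 / l) *\<^sub>R (q - (a + l *\<^sub>R x))"
  have "norm (q - (a + l *\<^sub>R x)) < l * r"
    using \<open>q \<in> ball _ _\<close> by (simp add: dist_norm norm_minus_commute)
  then have "y \<in> ball x r"
    using \<open>l > 0\<close> unfolding y_def by (simp add: dist_norm divide_less_eq mult.commute)
  then have "l *\<^sub>R y \<in> C"
    using assms(3,4,5) scale by auto
  moreover have "q = a + l *\<^sub>R y"
    using \<open>l > 0\<close> unfolding y_def by (simp add: algebra_simps)
  ultimately show "q \<in> C"
    using assms(4) add by auto
qed

lemma pointed_convex_cone_frontier_nonempty:
  fixes C :: "'a::euclidean_space set"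
  assumes "pointed_convex_cone C"
  shows "frontier C \<noteq> {}"
proof -
  have pointed: "C \<inter> uminus ` C = {0}"
    using assms unfolding pointed_convex_cone_def by blast
  obtain b :: 'a where "b \<in> Basis"
    using nonempty_Basis by blast
  then have "b \<noteq> 0"
    by auto
  have "C \<noteq> UNIV"
  proof
    assume "C = UNIV"
    then have "b \<in> C \<inter> uminus ` C"
      by (metis IntI UNIV_I image_eqI minus_minus)
    then show False
      using pointed \<open>b \<noteq> 0\<close> by simp
  qed
  moreover have "C \<noteq> {}"
    using pointed by blast
  ultimately show ?thesis
    by (simp add: frontier_eq_empty)
qed

lemma polar_normals_with_negative_support_uniformly_negative:
  fixes C E :: "'a::euclidean_space set"
  assumes "closed C" "cone C" "E \<noteq> {}" "E \<subseteq> C" "\<epsilon> > 0"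
    and vanish: "\<forall>v\<in>sphere 0 1 \<inter> frontier (polar_cone C). support_fun E v = 0"
  obtains c where "c > 0"
    "\<And>w y. w \<in> sphere 0 1 \<inter> polar_cone C \<Longrightarrow> \<forall>x\<in>E. x \<bullet> w \<le> - \<epsilon> \<Longrightarrow> y \<in> C \<Longrightarrow>
      y \<bullet> w \<le> - c * norm y"
proof -
  define T where "T = {w \<in> sphere 0 1 \<inter> polar_cone C. \<forall>x\<in>E. x \<bullet> w \<le> - \<epsilon>}"
  have "T = sphere 0 1 \<inter> polar_cone C \<inter> (\<Inter>x\<in>E. {w. x \<bullet> w \<le> - \<epsilon>})"
    unfolding T_def by auto
  then have "compact T"
    using closed_polar_cone[of C]
    by (simp add: closed_INT closed_Int closed_halfspace_le compact_Int_closed)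
  have "w \<in> interior (polar_cone C)" if "w \<in> T" for w
  proof -
    have "w \<in> sphere 0 1" "w \<in> polar_cone C"
      using that unfolding T_def by auto
    have "support_fun E w \<le> - \<epsilon>"
      using that support_fun_le_iff[OF \<open>E \<noteq> {}\<close> \<open>E \<subseteq> C\<close>] unfolding T_def by blast
    then have "support_fun E w \<noteq> 0"
      using \<open>\<epsilon> > 0\<close> by linarith
    then have "w \<notin> frontier (polar_cone C)"
      using vanish \<open>w \<in> sphere 0 1\<close> by blast
    then show ?thesis
      using \<open>w \<in> polar_cone C\<close> closed_polar_cone[of C]
      by (simp add: frontier_def closure_closed)
  qed
  then have "y \<bullet> w < 0" if "w \<in> T" "y \<in> C" "y \<noteq> 0" for w y
    using interior_polar_cone_iff[OF \<open>closed C\<close> \<open>cone C\<close>] that by blast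
  then obtain c where "c > 0" and "\<And>w y. w \<in> T \<Longrightarrow> y \<in> C \<Longrightarrow> y \<bullet> w \<le> - c * norm y"
    using cone_inner_uniformly_negative[OF \<open>closed C\<close> \<open>cone C\<close> \<open>compact T\<close>] by blast
  then show thesis
    using that unfolding T_def by blast
qed

lemma pseudo_cone_frontier_approaches_cone_frontier:
  fixes C E :: "'a::euclidean_space set"
  assumes C: "pointed_convex_cone C" and E: "pseudo_cone C E" and "\<epsilon> > 0"
    and vanish: "\<forall>v\<in>sphere 0 1 \<inter> frontier (polar_cone C). support_fun E v = 0"
  shows "\<exists>R. \<forall>x\<in>frontier E. R < norm x \<longrightarrow> infdist x (frontier C) < \<epsilon>"
proof -
  have "closed C" "cone C" "interior C \<noteq> {}"
    using C unfolding pointed_convex_cone_def by auto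
  have "E \<noteq> {}" "closed E" "E \<subseteq> C"
    using E pseudo_cone_subset_cone unfolding pseudo_cone_def by auto
  have "interior E \<noteq> {}"
    using pseudo_cone_interior_nonempty[OF E \<open>interior C \<noteq> {}\<close>] .
  obtain x0 where "x0 \<in> E"
    using \<open>E \<noteq> {}\<close> by blast
  obtain c where "c > 0" and c: "\<And>w y. w \<in> sphere 0 1 \<inter> polar_cone C \<Longrightarrow>
      \<forall>x\<in>E. x \<bullet> w \<le> - \<epsilon> \<Longrightarrow> y \<in> C \<Longrightarrow> y \<bullet> w \<le> - c * norm y"
    using polar_normals_with_negative_support_uniformly_negative[OF \<open>closed C\<close> \<open>cone C\<close>
        \<open>E \<noteq> {}\<close> \<open>E \<subseteq> C\<close> \<open>\<epsilon> > 0\<close> vanish] by blast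
  have "infdist x (frontier C) < \<epsilon>" if "x \<in> frontier E" "norm x0 / c < norm x" for x
  proof -
    obtain w where w: "norm w = 1" "w \<in> polar_cone C" and sup: "\<And>y. y \<in> E \<Longrightarrow> y \<bullet> w \<le> x \<bullet> w"
      using pseudo_cone_supporting_polar_normal[OF E \<open>interior E \<noteq> {}\<close> \<open>x \<in> frontier E\<close>] by blast
    have "x \<in> C"
      using \<open>x \<in> frontier E\<close> \<open>closed E\<close> \<open>E \<subseteq> C\<close> frontier_subset_closed by blast
    have "- \<epsilon> < x \<bullet> w"
    proof (rule ccontr)
      assume "\<not> - \<epsilon> < x \<bullet> w"
      then have "\<forall>y\<in>E. y \<bullet> w \<le> - \<epsilon>"
        using sup by force
      then have "c * norm x \<le> - (x \<bullet> w)"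
        using c[of w x] w \<open>x \<in> C\<close> by simp
      also have "\<dots> \<le> - (x0 \<bullet> w)"
        using sup[OF \<open>x0 \<in> E\<close>] by simp
      also have "\<dots> \<le> norm x0"
        using norm_cauchy_schwarz[of "- x0" w] \<open>norm w = 1\<close> by simp
      finally show False
        using \<open>norm x0 / c < norm x\<close> \<open>c > 0\<close> by (simp add: divide_less_eq mult.commute)
    qed
    then show ?thesis
      using infdist_frontier_le_polar[OF \<open>x \<in> C\<close> w(2,1)] by linarith
  qed
  then show ?thesis
    by blast
qed

lemma asymptotic_set_if_support_fun_vanishes:
  fixes C E :: "'a::euclidean_space set"
  assumes C: "pointed_convex_cone C" and E: "pseudo_cone C E"
    and "\<forall>v\<in>sphere 0 1 \<inter> frontier (polar_cone C). support_fun E v = 0"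
  shows "asymptotic_set C E"
proof -
  have "interior C \<noteq> {}"
    using C unfolding pointed_convex_cone_def by blast
  then show ?thesis
    unfolding asymptotic_set_def
    using E pseudo_cone_subset_cone[OF E] pseudo_cone_unbounded[OF E]
      pseudo_cone_interior_nonempty[OF E] pseudo_cone_frontier_approaches_cone_frontier[OF C E _ assms(3)]
    unfolding pseudo_cone_def by blast
qed

lemma pseudo_cone_segment_meets_frontier:
  assumes E: "pseudo_cone C E" and "p \<in> C" "p \<notin> E" "x \<in> E"
  obtains l where "0 \<le> l" "l \<le> 1" "p + l *\<^sub>R x \<in> frontier E"
proof -
  have "p + x \<in> E"
    using pseudo_cone_add_cone[OF E \<open>x \<in> E\<close> \<open>p \<in> C\<close>] by (simp add: add.commute)
  then have "closed_segment p (p + x) \<inter> frontier E \<noteq> {}"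
    using \<open>p \<notin> E\<close> by (intro connected_Int_frontier[OF connected_segment]) auto
  then obtain z where "z \<in> closed_segment p (p + x)" "z \<in> frontier E"
    by blast
  then show thesis
    using that unfolding closed_segment_def by (auto simp: algebra_simps)
qed

lemma pseudo_cone_far_frontier_points_deep_in_cone:
  fixes C E :: "'a::euclidean_space set"
  assumes C: "pointed_convex_cone C" and E: "pseudo_cone C E" and "interior E \<noteq> {}"
    and "u \<in> C" "u \<noteq> 0" "u \<bullet> v = 0"
    and "\<delta> > 0" and Ev: "\<And>x. x \<in> E \<Longrightarrow> x \<bullet> v \<le> - \<delta>"
  obtains \<rho> where "\<rho> > 0" "\<And>R. \<exists>z\<in>frontier E. R < norm z \<and> ball z \<rho> \<subseteq> C"
proof -
  have "convex C" "cone C"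
    using C unfolding pointed_convex_cone_def by auto
  have "closed E" "E \<subseteq> C"
    using E pseudo_cone_subset_cone unfolding pseudo_cone_def by auto
  obtain x0 r where "r > 0" "ball x0 r \<subseteq> E"
    using \<open>interior E \<noteq> {}\<close> mem_interior by blast
  then have "x0 \<in> E"
    by auto
  define a where "a = - (x0 \<bullet> v)"
  have "a > 0"
    unfolding a_def using Ev[OF \<open>x0 \<in> E\<close>] \<open>\<delta> > 0\<close> by simp
  define s where "s = \<delta> / a"
  have "s > 0"
    unfolding s_def using \<open>\<delta> > 0\<close> \<open>a > 0\<close> by simp
  have "\<exists>z\<in>frontier E. R < norm z \<and> ball z (s * r) \<subseteq> C" for R
  proof -
    define t where "t = (\<bar>R\<bar> + norm x0 + 1) / norm u"
    have "t *\<^sub>R u \<in> C"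
      using \<open>cone C\<close> \<open>u \<in> C\<close> unfolding t_def cone_def by simp
    moreover have "t *\<^sub>R u \<notin> E"
      using Ev[of "t *\<^sub>R u"] \<open>u \<bullet> v = 0\<close> \<open>\<delta> > 0\<close> by auto
    ultimately obtain l where "0 \<le> l" "l \<le> 1" and z: "t *\<^sub>R u + l *\<^sub>R x0 \<in> frontier E"
      using pseudo_cone_segment_meets_frontier[OF E _ _ \<open>x0 \<in> E\<close>] by blast
    define z where "z = t *\<^sub>R u + l *\<^sub>R x0"
    have "z \<in> E"
      using z \<open>closed E\<close> frontier_subset_closed unfolding z_def by blast
    then have "\<delta> \<le> l * a"
      using Ev[of z] \<open>u \<bullet> v = 0\<close> unfolding z_def a_def by (simp add: inner_add_left)
    then have "s \<le> l"
      unfolding s_def using \<open>a > 0\<close> by (simp add: pos_divide_le_eq)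
    have "\<bar>R\<bar> + norm x0 + 1 = norm (t *\<^sub>R u)"
      using \<open>u \<noteq> 0\<close> unfolding t_def by simp
    also have "\<dots> \<le> norm z + norm (l *\<^sub>R x0)"
      unfolding z_def by (metis add_diff_cancel_right' norm_triangle_ineq4)
    also have "norm (l *\<^sub>R x0) \<le> norm x0"
      using \<open>0 \<le> l\<close> \<open>l \<le> 1\<close> by (simp add: mult_left_le_one_le)
    finally have "R < norm z"
      by linarith
    have "ball x0 r \<subseteq> C" "l > 0"
      using \<open>ball x0 r \<subseteq> E\<close> \<open>E \<subseteq> C\<close> \<open>s \<le> l\<close> \<open>s > 0\<close> by auto
    then have "ball z (l * r) \<subseteq> C"
      unfolding z_def by (rule convex_cone_ball_translate_scale[OF \<open>convex C\<close> \<open>cone C\<close> _ \<open>t *\<^sub>R u \<in> C\<close>])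
    moreover have "ball z (s * r) \<subseteq> ball z (l * r)"
      using \<open>s \<le> l\<close> \<open>r > 0\<close> by (intro subset_ball mult_right_mono) auto
    ultimately show ?thesis
      using z \<open>R < norm z\<close> unfolding z_def by blast
  qed
  moreover have "s * r > 0"
    using \<open>s > 0\<close> \<open>r > 0\<close> by simp
  ultimately show thesis
    using that by blast
qed

lemma support_fun_vanishes_if_asymptotic_set:
  fixes C E :: "'a::euclidean_space set"
  assumes C: "pointed_convex_cone C" and E: "pseudo_cone C E" and A: "asymptotic_set C E"
    and v: "v \<in> frontier (polar_cone C)"
  shows "support_fun E v = 0"
proof (rule ccontr)
  assume "support_fun E v \<noteq> 0"
  have "closed C" "cone C"
    using C unfolding pointed_convex_cone_def by auto
  have "E \<noteq> {}" "E \<subseteq> C"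
    using E pseudo_cone_subset_cone unfolding pseudo_cone_def by auto
  obtain u where "v \<in> polar_cone C" "u \<in> C" "u \<noteq> 0" "u \<bullet> v = 0"
    using v frontier_polar_cone_iff[OF \<open>closed C\<close> \<open>cone C\<close>] by blast
  note support_le = support_fun_le_iff[OF \<open>E \<noteq> {}\<close> \<open>E \<subseteq> C\<close> \<open>v \<in> polar_cone C\<close>]
  have "support_fun E v \<le> 0"
    using \<open>E \<subseteq> C\<close> \<open>v \<in> polar_cone C\<close> unfolding support_le polar_cone_def by blast
  define \<delta> where "\<delta> = - support_fun E v"
  have "\<delta> > 0"
    using \<open>support_fun E v \<le> 0\<close> \<open>support_fun E v \<noteq> 0\<close> unfolding \<delta>_def by simp
  have Ev: "x \<bullet> v \<le> - \<delta>" if "x \<in> E" for x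
    using support_le[of "- \<delta>"] that unfolding \<delta>_def by simp
  have "interior E \<noteq> {}"
    using A unfolding asymptotic_set_def by blast
  then obtain \<rho> where "\<rho> > 0" and deep: "\<And>R. \<exists>z\<in>frontier E. R < norm z \<and> ball z \<rho> \<subseteq> C"
    using pseudo_cone_far_frontier_points_deep_in_cone[OF C E _ \<open>u \<in> C\<close> \<open>u \<noteq> 0\<close> \<open>u \<bullet> v = 0\<close> \<open>\<delta> > 0\<close> Ev]
    by blast
  obtain R where R: "\<And>z. z \<in> frontier E \<Longrightarrow> R < norm z \<Longrightarrow> infdist z (frontier C) < \<rho>"
    using A \<open>\<rho> > 0\<close> unfolding asymptotic_set_def by meson
  obtain z where "z \<in> frontier E" "R < norm z" "ball z \<rho> \<subseteq> C"
    using deep by blast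
  then have "\<rho> \<le> infdist z (frontier C)"
    using ball_subset_le_infdist_frontier pointed_convex_cone_frontier_nonempty[OF C] by blast
  then show False
    using R[OF \<open>z \<in> frontier E\<close> \<open>R < norm z\<close>] by linarith
qed

theorem corollary3p1:
  fixes C E :: "'a::euclidean_space set"
  assumes "DIM('a) \<ge> 2"
    and "pointed_convex_cone C"
    and "pseudo_cone C E"
  shows "asymptotic_set C E \<longleftrightarrow>
         (\<forall>v\<in>sphere 0 1 \<inter> frontier (polar_cone C). support_fun E v = 0)"
  using asymptotic_set_if_support_fun_vanishes[OF assms(2,3)]
    support_fun_vanishes_if_asymptotic_set[OF assms(2,3)]
  by blast

end
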